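(* Let $\Gamma$ be a simple, undirected, connected graph with $p\ge 2$ vertices, minimum degree $\delta(\Gamma)\ge 2$, maximum degree $\Delta(\Gamma)$ and girth at least $5$. Then $\gamma_{[3R]}(\Gamma)\le 2p-2\Delta(\Gamma)+1$.
   Context: The girth of a graph is the minimum length of a cycle in it. For a graph $\Gamma=(V,E)$ and $h:V\to\{0,1,2,3,4\}$, let $AN(v)=\{w\in N(v):h(w)\ge 1\}$, $AN[v]=AN(v)\cup\{v\}$ and $h(S)=\sum_{u\in S}h(u)$. $h$ is a triple Roman dominating function (3RDF) if every $v$ with $h(v)<3$ satisfies $h(AN[v])\ge|AN(v)|+3$. The triple Roman domination number $\gamma_{[3R]}(\Gamma)$ is the minimum weight $h(V)$ of a 3RDF of $\Gamma$. *)

theory Defs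
  imports Main
begin

definition simple_graph :: "'a set \<Rightarrow> ('a \<Rightarrow> 'a \<Rightarrow> bool) \<Rightarrow> bool" where
  "simple_graph V E \<longleftrightarrow> finite V \<and>
     (\<forall>u v. E u v \<longrightarrow> u \<in> V \<and> v \<in> V) \<and>
     (\<forall>u v. E u v \<longrightarrow> E v u) \<and> (\<forall>v. \<not> E v v)"

definition nbhd :: "'a set \<Rightarrow> ('a \<Rightarrow> 'a \<Rightarrow> bool) \<Rightarrow> 'a \<Rightarrow> 'a set" where
  "nbhd V E v = {w \<in> V. E v w}"

definition degree :: "'a set \<Rightarrow> ('a \<Rightarrow> 'a \<Rightarrow> bool) \<Rightarrow> 'a \<Rightarrow> nat" where
  "degree V E v = card (nbhd V E v)"

definition min_degree :: "'a set \<Rightarrow> ('a \<Rightarrow> 'a \<Rightarrow> bool) \<Rightarrow> nat" where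
  "min_degree V E = Min (degree V E ` V)"

definition max_degree :: "'a set \<Rightarrow> ('a \<Rightarrow> 'a \<Rightarrow> bool) \<Rightarrow> nat" where
  "max_degree V E = Max (degree V E ` V)"

definition connected_graph :: "'a set \<Rightarrow> ('a \<Rightarrow> 'a \<Rightarrow> bool) \<Rightarrow> bool" where
  "connected_graph V E \<longleftrightarrow> (\<forall>u\<in>V. \<forall>v\<in>V. E\<^sup>*\<^sup>* u v)"

definition is_cycle :: "'a set \<Rightarrow> ('a \<Rightarrow> 'a \<Rightarrow> bool) \<Rightarrow> 'a list \<Rightarrow> bool" where
  "is_cycle V E cs \<longleftrightarrow> length cs \<ge> 3 \<and> distinct cs \<and> set cs \<subseteq> V \<and>
     (\<forall>i < length cs. E (cs ! i) (cs ! ((i + 1) mod length cs)))"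

text \<open>Girth at least g: every cycle has length at least g (vacuous for acyclic graphs,
whose girth is infinite).\<close>
definition girth_at_least :: "'a set \<Rightarrow> ('a \<Rightarrow> 'a \<Rightarrow> bool) \<Rightarrow> nat \<Rightarrow> bool" where
  "girth_at_least V E g \<longleftrightarrow> (\<forall>cs. is_cycle V E cs \<longrightarrow> length cs \<ge> g)"

definition active_nbhd :: "'a set \<Rightarrow> ('a \<Rightarrow> 'a \<Rightarrow> bool) \<Rightarrow> ('a \<Rightarrow> nat) \<Rightarrow> 'a \<Rightarrow> 'a set" where
  "active_nbhd V E h v = {w \<in> nbhd V E v. h w \<ge> 1}"

definition is_3RDF :: "'a set \<Rightarrow> ('a \<Rightarrow> 'a \<Rightarrow> bool) \<Rightarrow> ('a \<Rightarrow> nat) \<Rightarrow> bool" where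
  "is_3RDF V E h \<longleftrightarrow> (\<forall>v\<in>V. h v \<le> 4) \<and>
     (\<forall>v\<in>V. h v < 3 \<longrightarrow>
        sum h (insert v (active_nbhd V E h v)) \<ge> card (active_nbhd V E h v) + 3)"

definition triple_roman_domination_number :: "'a set \<Rightarrow> ('a \<Rightarrow> 'a \<Rightarrow> bool) \<Rightarrow> nat" where
  "triple_roman_domination_number V E = Inf {sum h V | h. is_3RDF V E h}"

end

theory Submission
  imports Defs
begin

text \<open>Give weight 3 to a vertex v of maximum degree, 0 to its \<Delta> neighbours and 2 to the
remaining p - 1 - \<Delta> vertices; the total is 2p - 2\<Delta> + 1. A neighbour x of v sees v and, as
\<delta> \<ge> 2, some other neighbour, which is not adjacent to v because there are no triangles and
therefore has weight 2. Any other vertex x has weight 2 itself and only needs one neighbour of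
weight 2: since there are no 4-cycles, at most one of its \<ge> 2 neighbours is adjacent to v.\<close>

lemma card_ge_2_obtain_other:
  assumes "2 \<le> card A"
  obtains w where "w \<in> A" "w \<noteq> v"
proof -
  have "card (A - {v}) \<noteq> 0"
    using assms by (cases "v \<in> A") (auto simp: card_Diff_singleton_if)
  then obtain w where "w \<in> A - {v}"
    by (metis card.empty ex_in_conv)
  then show thesis using that by blast
qed

lemma simple_graphD:
  assumes "simple_graph V E"
  shows "finite V" and "E u w \<Longrightarrow> u \<in> V" and "E u w \<Longrightarrow> w \<in> V"
    and "E u w \<Longrightarrow> E w u" and "\<not> E u u"
  using assms unfolding simple_graph_def by blast+

lemma mem_nbhd_iff: "simple_graph V E \<Longrightarrow> w \<in> nbhd V E u \<longleftrightarrow> E u w"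
  unfolding nbhd_def by (auto dest: simple_graphD)

lemma girth_at_least_no_triangle:
  assumes G: "simple_graph V E" and "girth_at_least V E g" "4 \<le> g"
    and "E a b" "E b c"
  shows "\<not> E c a"
proof
  assume "E c a"
  then have "is_cycle V E [a, b, c]"
    using assms simple_graphD[OF G]
    unfolding is_cycle_def by (auto simp: less_Suc_eq)
  then show False using assms(2,3) unfolding girth_at_least_def by fastforce
qed

lemma girth_at_least_no_4_cycle:
  assumes G: "simple_graph V E" and "girth_at_least V E g" "5 \<le> g"
    and "E a b" "E b c" "E c d" "a \<noteq> c" "b \<noteq> d"
  shows "\<not> E d a"
proof
  assume "E d a"
  then have "is_cycle V E [a, b, c, d]"
    using assms simple_graphD[OF G]
    unfolding is_cycle_def by (auto simp: less_Suc_eq)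
  then show False using assms(2,3) unfolding girth_at_least_def by fastforce
qed

lemma degree_ge_2_obtain_other_nbr:
  assumes G: "simple_graph V E" and "2 \<le> degree V E x"
  obtains w where "E x w" "w \<noteq> u"
proof -
  obtain w where "w \<in> nbhd V E x" "w \<noteq> u"
    using assms(2) unfolding degree_def by (rule card_ge_2_obtain_other)
  then show thesis using that mem_nbhd_iff[OF G] by blast
qed

lemma sum_active_nbhd_ge:
  assumes G: "simple_graph V E" and "B \<subseteq> active_nbhd V E h x"
  shows "card (active_nbhd V E h x) + h x + (\<Sum>y\<in>B. h y - 1)
           \<le> sum h (insert x (active_nbhd V E h x))"
proof -
  let ?A = "active_nbhd V E h x"
  have fin: "finite ?A" and "x \<notin> ?A"
    using simple_graphD[OF G] unfolding active_nbhd_def nbhd_def by auto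
  have "sum h ?A = (\<Sum>y\<in>?A. 1 + (h y - 1))"
    by (rule sum.cong) (auto simp: active_nbhd_def)
  also have "\<dots> = card ?A + (\<Sum>y\<in>?A. h y - 1)"
    by (simp only: sum.distrib) simp
  finally have "sum h ?A = card ?A + (\<Sum>y\<in>?A. h y - 1)" .
  moreover have "(\<Sum>y\<in>B. h y - 1) \<le> (\<Sum>y\<in>?A. h y - 1)"
    by (rule sum_mono2[OF fin assms(2)]) simp
  ultimately show ?thesis using fin \<open>x \<notin> ?A\<close> by simp
qed

definition hub_3RDF :: "'a set \<Rightarrow> ('a \<Rightarrow> 'a \<Rightarrow> bool) \<Rightarrow> 'a \<Rightarrow> 'a \<Rightarrow> nat" where
  "hub_3RDF V E v x = (if x = v then 3 else if E v x then 0 else 2)"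

lemma weight_hub_3RDF:
  assumes G: "simple_graph V E" and "v \<in> V"
  shows "int (sum (hub_3RDF V E v) V) = 2 * int (card V) - 2 * int (degree V E v) + 1"
proof -
  let ?N = "nbhd V E v"
  have fin: "finite V" using simple_graphD[OF G] by blast
  have "int (hub_3RDF V E v x) = 2 - 2 * of_bool (x \<in> ?N) + of_bool (x = v)" for x
    using simple_graphD(5)[OF G, of v] mem_nbhd_iff[OF G] by (auto simp: hub_3RDF_def)
  then have "int (sum (hub_3RDF V E v) V)
      = (\<Sum>x\<in>V. 2 - 2 * of_bool (x \<in> ?N) + of_bool (x = v))"
    by (simp add: of_nat_sum)
  also have "\<dots> = 2 * int (card V) - 2 * (\<Sum>x\<in>V. of_bool (x \<in> ?N)) + (\<Sum>x\<in>V. of_bool (x = v))"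
    by (simp add: sum.distrib sum_subtractf sum_distrib_left)
  also have "(\<Sum>x\<in>V. of_bool (x = v) :: int) = 1"
    using fin \<open>v \<in> V\<close> by (simp add: of_bool_def sum.delta)
  also have "(\<Sum>x\<in>V. of_bool (x \<in> ?N) :: int) = int (card (V \<inter> ?N))"
    using fin by (simp add: of_bool_def sum.If_cases)
  also have "V \<inter> ?N = ?N" unfolding nbhd_def by blast
  finally show ?thesis unfolding degree_def .
qed

lemma is_3RDF_hub_3RDF:
  assumes G: "simple_graph V E" and girth: "girth_at_least V E 5"
    and deg: "\<And>x. x \<in> V \<Longrightarrow> 2 \<le> degree V E x"
  shows "is_3RDF V E (hub_3RDF V E v)"
  unfolding is_3RDF_def
proof (intro conjI ballI impI)
  let ?h = "hub_3RDF V E v"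
  fix x assume "x \<in> V"
  show "?h x \<le> 4" by (simp add: hub_3RDF_def)
next
  let ?h = "hub_3RDF V E v"
  have sym: "E u w \<Longrightarrow> E w u" for u w using simple_graphD(4)[OF G] .
  fix x assume x: "x \<in> V" "?h x < 3"
  then have "x \<noteq> v" by (cases "x = v") (simp_all add: hub_3RDF_def)
  have active: "w \<in> active_nbhd V E ?h x" if "E x w" "1 \<le> ?h w" for w
    using that mem_nbhd_iff[OF G] by (simp add: active_nbhd_def)
  note other_nbr = degree_ge_2_obtain_other_nbr[OF G deg[OF x(1)]]
  show "card (active_nbhd V E ?h x) + 3 \<le> sum ?h (insert x (active_nbhd V E ?h x))"
  proof (cases "E v x")
    case True
    obtain w where "E x w" "w \<noteq> v" by (rule other_nbr)
    moreover have "\<not> E v w"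
      using girth_at_least_no_triangle[OF G girth _ True \<open>E x w\<close>] sym by auto
    ultimately have "?h w = 2" by (simp add: hub_3RDF_def)
    then have "{v, w} \<subseteq> active_nbhd V E ?h x"
      using active sym[OF True] \<open>E x w\<close> by (simp add: hub_3RDF_def)
    from sum_active_nbhd_ge[OF G this] show ?thesis
      using \<open>?h w = 2\<close> \<open>w \<noteq> v\<close> by (simp add: hub_3RDF_def)
  next
    case False
    obtain a where "E x a" by (rule other_nbr)
    obtain b where "E x b" "b \<noteq> a" by (rule other_nbr)
    have "\<not> E v a \<or> \<not> E v b"
      using girth_at_least_no_4_cycle[OF G girth _ _ sym[OF \<open>E x a\<close>] \<open>E x b\<close>]
        \<open>x \<noteq> v\<close> \<open>b \<noteq> a\<close> sym by auto
    then obtain w where "E x w" "\<not> E v w"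
      using \<open>E x a\<close> \<open>E x b\<close> by blast
    moreover have "w \<noteq> v" using False sym[OF \<open>E x w\<close>] by blast
    ultimately have "?h w = 2" by (simp add: hub_3RDF_def)
    then have "{w} \<subseteq> active_nbhd V E ?h x" using active \<open>E x w\<close> by simp
    from sum_active_nbhd_ge[OF G this] show ?thesis
      using \<open>?h w = 2\<close> \<open>x \<noteq> v\<close> False by (simp add: hub_3RDF_def)
  qed
qed

lemma triple_roman_domination_number_le:
  "is_3RDF V E h \<Longrightarrow> triple_roman_domination_number V E \<le> sum h V"
  unfolding triple_roman_domination_number_def by (rule cInf_lower) auto

lemma min_degree_le_degree:
  "finite V \<Longrightarrow> x \<in> V \<Longrightarrow> min_degree V E \<le> degree V E x"
  unfolding min_degree_def by simp

lemma max_degree_attained: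
  assumes "finite V" "V \<noteq> {}"
  obtains v where "v \<in> V" "degree V E v = max_degree V E"
proof -
  have "max_degree V E \<in> degree V E ` V"
    unfolding max_degree_def using assms by (intro Max_in) auto
  then show thesis using that by (metis imageE)
qed

theorem proposition9:
  fixes V :: "'a set" and E :: "'a \<Rightarrow> 'a \<Rightarrow> bool"
  assumes "simple_graph V E"
    and "connected_graph V E"
    and "card V \<ge> 2"
    and "min_degree V E \<ge> 2"
    and "girth_at_least V E 5"
  shows "int (triple_roman_domination_number V E)
           \<le> 2 * int (card V) - 2 * int (max_degree V E) + 1"
proof -
  have "finite V" using simple_graphD(1)[OF assms(1)] .
  moreover have "V \<noteq> {}" using assms(3) by auto
  ultimately obtain v where "v \<in> V" "degree V E v = max_degree V E"
    by (rule max_degree_attained)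
  have "2 \<le> degree V E x" if "x \<in> V" for x
    using assms(4) min_degree_le_degree[OF \<open>finite V\<close> that, where E = E] by linarith
  then have "is_3RDF V E (hub_3RDF V E v)"
    by (rule is_3RDF_hub_3RDF[OF assms(1) assms(5)])
  then have "int (triple_roman_domination_number V E) \<le> int (sum (hub_3RDF V E v) V)"
    by (simp only: of_nat_le_iff) (rule triple_roman_domination_number_le)
  also have "\<dots> = 2 * int (card V) - 2 * int (max_degree V E) + 1"
    using weight_hub_3RDF[OF assms(1) \<open>v \<in> V\<close>] \<open>degree V E v = max_degree V E\<close> by simp
  finally show ?thesis .
qed

end
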